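(* If $\vec t\succ\vec t'_1$ and $\vec t\succ\vec t'_2$, then one of the following holds: $\vec t'_1=\vec t'_2$; or $\vec t'_1\succ\vec t'_2$; or $\vec t'_2\succ\vec t'_1$; or there is $\vec t''$ with $\vec t'_1\succ\vec t''$ and $\vec t'_2\succ\vec t''$.
   Context: Calculus. Pure values: $v,w::=x\mid\lambda x.\vec{s}\mid *\mid (v_1,v_2)\mid \mathtt{inl}(v)\mid\mathtt{inr}(v)$. Pure terms: $s,t::=v\mid s\,t\mid t;\vec{s}\mid \mathtt{let}\,(x_1,x_2)=t\,\mathtt{in}\,\vec{s}\mid \mathtt{match}\,t\,\{\mathtt{inl}\,x_1\mapsto\vec{s}_1\mid\mathtt{inr}\,x_2\mapsto\vec{s}_2\}$. Term distributions $\vec{t}::=\vec{0}\mid t\mid \vec{s}+\vec{t}\mid\alpha\cdot\vec{t}$ ($\alpha\in\mathbb{C}$), with equality $=$ at top level meaning the congruence generated by the weak vector space laws ($+$ commutative, associative with unit $\vec0$; $1\cdot\vec t=\vec t$; $\alpha\cdot(\beta\cdot\vec t)=\alpha\beta\cdot\vec t$; $(\alpha+\beta)\cdot\vec t=\alpha\cdot\vec t+\beta\cdot\vec t$; $\alpha\cdot(\vec t_1+\vec t_2)=\alpha\cdot\vec t_1+\alpha\cdot\vec t_2$), not acting inside pure terms and not identifying $0\cdot t$ with $\vec0$. Constructs are extended by linearity (application bilinear, pairs bilinear, $\mathtt{inl},\mathtt{inr}$ linear, $;$, let, match linear in the first argument). Atomic evaluation $t\triangleright\vec t'$: $(\lambda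 x.\vec t)\,v\triangleright\vec t[x:=v]$; $*;\vec s\triangleright\vec s$; $\mathtt{let}\,(x,y)=(v,w)\,\mathtt{in}\,\vec s\triangleright\vec s[x:=v,y:=w]$; $\mathtt{match}\,\mathtt{inl}(v)\{\ldots\}\triangleright\vec s_1[x_1:=v]$; $\mathtt{match}\,\mathtt{inr}(v)\{\ldots\}\triangleright\vec s_2[x_2:=v]$; if $t\triangleright\vec t'$ then $s\,t\triangleright s\,\vec t'$, $t\,v\triangleright\vec t'\,v$, $t;\vec s\triangleright\vec t';\vec s$, and likewise in the scrutinee of let and match ($v,w$ pure values). One-step evaluation: $\vec t\succ\vec t'$ iff $\vec t=\alpha\cdot s+\vec r$ and $\vec t'=\alpha\cdot\vec s'+\vec r$ for some $\alpha\in\mathbb C$, pure term $s$, distributions $\vec s',\vec r$ with $s\triangleright\vec s'$. *)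

theory Defs
  imports Complex_Main
begin

text \<open>Syntax of the calculus, with variables as de Bruijn indices (terms are
identified up to alpha-equivalence).  In \<open>\<lambda>x. s\<close> and in a match branch the
bound variable is index 0; in \<open>let (x1,x2) = t in s\<close> the variable x2 is
index 0 and x1 is index 1.  Pure values, pure terms and (syntactic) term
distributions are mutually defined.\<close>

datatype val =
    Var nat
  | Lam dist
  | Unit
  | PairV val val
  | InlV val
  | InrV val
and trm =
    V val
  | App trm trm
  | Seq trm dist
  | LetP trm dist
  | Match trm dist dist
and dist =
    DZero
  | Pure trm
  | DPlus dist dist
  | DScal complex dist

fun liftv :: "nat \<Rightarrow> val \<Rightarrow> val"
and liftt :: "nat \<Rightarrow> trm \<Rightarrow> trm"
and liftd :: "nat \<Rightarrow> dist \<Rightarrow> dist" where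
  "liftv k (Var n) = (if n < k then Var n else Var (Suc n))"
| "liftv k (Lam d) = Lam (liftd (Suc k) d)"
| "liftv k Unit = Unit"
| "liftv k (PairV v w) = PairV (liftv k v) (liftv k w)"
| "liftv k (InlV v) = InlV (liftv k v)"
| "liftv k (InrV v) = InrV (liftv k v)"
| "liftt k (V v) = V (liftv k v)"
| "liftt k (App s t) = App (liftt k s) (liftt k t)"
| "liftt k (Seq t d) = Seq (liftt k t) (liftd k d)"
| "liftt k (LetP t d) = LetP (liftt k t) (liftd (Suc (Suc k)) d)"
| "liftt k (Match t d1 d2) = Match (liftt k t) (liftd (Suc k) d1) (liftd (Suc k) d2)"
| "liftd k DZero = DZero"
| "liftd k (Pure t) = Pure (liftt k t)"
| "liftd k (DPlus d e) = DPlus (liftd k d) (liftd k e)"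
| "liftd k (DScal a d) = DScal a (liftd k d)"

fun substv :: "nat \<Rightarrow> val \<Rightarrow> val \<Rightarrow> val"
and substt :: "nat \<Rightarrow> val \<Rightarrow> trm \<Rightarrow> trm"
and substd :: "nat \<Rightarrow> val \<Rightarrow> dist \<Rightarrow> dist" where
  "substv k u (Var n) = (if n < k then Var n else if n = k then u else Var (n - 1))"
| "substv k u (Lam d) = Lam (substd (Suc k) (liftv 0 u) d)"
| "substv k u Unit = Unit"
| "substv k u (PairV v w) = PairV (substv k u v) (substv k u w)"
| "substv k u (InlV v) = InlV (substv k u v)"
| "substv k u (InrV v) = InrV (substv k u v)"
| "substt k u (V v) = V (substv k u v)"
| "substt k u (App s t) = App (substt k u s) (substt k u t)"
| "substt k u (Seq t d) = Seq (substt k u t) (substd k u d)"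
| "substt k u (LetP t d) = LetP (substt k u t) (substd (Suc (Suc k)) (liftv 0 (liftv 0 u)) d)"
| "substt k u (Match t d1 d2) =
     Match (substt k u t) (substd (Suc k) (liftv 0 u) d1) (substd (Suc k) (liftv 0 u) d2)"
| "substd k u DZero = DZero"
| "substd k u (Pure t) = Pure (substt k u t)"
| "substd k u (DPlus d e) = DPlus (substd k u d) (substd k u e)"
| "substd k u (DScal a d) = DScal a (substd k u d)"

fun appL :: "trm \<Rightarrow> dist \<Rightarrow> dist" where
  "appL s DZero = DZero"
| "appL s (Pure t) = Pure (App s t)"
| "appL s (DPlus d e) = DPlus (appL s d) (appL s e)"
| "appL s (DScal a d) = DScal a (appL s d)"

fun appR :: "dist \<Rightarrow> val \<Rightarrow> dist" where
  "appR DZero v = DZero"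
| "appR (Pure t) v = Pure (App t (V v))"
| "appR (DPlus d e) v = DPlus (appR d v) (appR e v)"
| "appR (DScal a d) v = DScal a (appR d v)"

fun seqD :: "dist \<Rightarrow> dist \<Rightarrow> dist" where
  "seqD DZero s = DZero"
| "seqD (Pure t) s = Pure (Seq t s)"
| "seqD (DPlus d e) s = DPlus (seqD d s) (seqD e s)"
| "seqD (DScal a d) s = DScal a (seqD d s)"

fun letD :: "dist \<Rightarrow> dist \<Rightarrow> dist" where
  "letD DZero s = DZero"
| "letD (Pure t) s = Pure (LetP t s)"
| "letD (DPlus d e) s = DPlus (letD d s) (letD e s)"
| "letD (DScal a d) s = DScal a (letD d s)"

fun matchD :: "dist \<Rightarrow> dist \<Rightarrow> dist \<Rightarrow> dist" where
  "matchD DZero s1 s2 = DZero"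
| "matchD (Pure t) s1 s2 = Pure (Match t s1 s2)"
| "matchD (DPlus d e) s1 s2 = DPlus (matchD d s1 s2) (matchD e s1 s2)"
| "matchD (DScal a d) s1 s2 = DScal a (matchD d s1 s2)"

text \<open>Equality of distributions: the congruence (w.r.t. + and scalar
multiplication, not acting inside pure terms) generated by the weak vector
space laws.\<close>
inductive deq :: "dist \<Rightarrow> dist \<Rightarrow> bool" where
  deq_refl: "deq d d"
| deq_sym: "deq d e \<Longrightarrow> deq e d"
| deq_trans: "deq d e \<Longrightarrow> deq e f \<Longrightarrow> deq d f"
| deq_plus: "deq d d' \<Longrightarrow> deq e e' \<Longrightarrow> deq (DPlus d e) (DPlus d' e')"
| deq_scal: "deq d d' \<Longrightarrow> deq (DScal a d) (DScal a d')"
| deq_comm: "deq (DPlus d e) (DPlus e d)"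
| deq_assoc: "deq (DPlus (DPlus d e) f) (DPlus d (DPlus e f))"
| deq_zero: "deq (DPlus d DZero) d"
| deq_one: "deq (DScal 1 d) d"
| deq_mult: "deq (DScal a (DScal b d)) (DScal (a * b) d)"
| deq_distr1: "deq (DScal (a + b) d) (DPlus (DScal a d) (DScal b d))"
| deq_distr2: "deq (DScal a (DPlus d e)) (DPlus (DScal a d) (DScal a e))"

inductive atomic :: "trm \<Rightarrow> dist \<Rightarrow> bool" where
  at_beta: "atomic (App (V (Lam d)) (V v)) (substd 0 v d)"
| at_seq: "atomic (Seq (V Unit) s) s"
| at_let: "atomic (LetP (V (PairV v w)) s) (substd 0 v (substd 0 (liftv 0 w) s))"
| at_inl: "atomic (Match (V (InlV v)) s1 s2) (substd 0 v s1)"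
| at_inr: "atomic (Match (V (InrV v)) s1 s2) (substd 0 v s2)"
| at_appR: "atomic t d \<Longrightarrow> atomic (App s t) (appL s d)"
| at_appL: "atomic t d \<Longrightarrow> atomic (App t (V v)) (appR d v)"
| at_seqC: "atomic t d \<Longrightarrow> atomic (Seq t s) (seqD d s)"
| at_letC: "atomic t d \<Longrightarrow> atomic (LetP t s) (letD d s)"
| at_matchC: "atomic t d \<Longrightarrow> atomic (Match t s1 s2) (matchD d s1 s2)"

definition step :: "dist \<Rightarrow> dist \<Rightarrow> bool" where
  "step d d' \<longleftrightarrow> (\<exists>a s s' r. deq d (DPlus (DScal a (Pure s)) r)
                            \<and> deq d' (DPlus (DScal a s') r) \<and> atomic s s')"

end

theory Submission
  imports Defs
begin

text \<open>A distribution is determined up to \<open>deq\<close> by the set of pure terms occurring in it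
together with their coefficients; the set matters because \<open>0 \<cdot> t\<close> is not identified with
\<open>0\<close>.  In this model a step replaces the coefficient \<open>a\<close> of a redex \<open>s\<close> by \<open>a\<close> times the
coefficients of its reduct, and it may remove \<open>s\<close> from the set only when \<open>a\<close> is the full
coefficient of \<open>s\<close>.  Since atomic evaluation is deterministic, two steps on the same redex
differ only in how much of its coefficient they consume, so one of them can catch up with
the other (or both remove \<open>s\<close> and agree); two steps on different redexes commute.\<close>

fun dterms :: "dist \<Rightarrow> trm set" where
  "dterms DZero = {}"
| "dterms (Pure t) = {t}"
| "dterms (DPlus d e) = dterms d \<union> dterms e"
| "dterms (DScal a d) = dterms d"

fun dcoef :: "dist \<Rightarrow> trm \<Rightarrow> complex" where
  "dcoef DZero = (\<lambda>_. 0)"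
| "dcoef (Pure t) = (\<lambda>u. if u = t then 1 else 0)"
| "dcoef (DPlus d e) = (\<lambda>u. dcoef d u + dcoef e u)"
| "dcoef (DScal a d) = (\<lambda>u. a * dcoef d u)"

lemma finite_dterms: "finite (dterms d)"
  by (induction d rule: dterms.induct) auto

lemma dcoef_nonzero_imp_dterms: "dcoef d u \<noteq> 0 \<Longrightarrow> u \<in> dterms d"
  by (induction d rule: dterms.induct) (fastforce split: if_splits)+

lemma deq_sound: "deq d e \<Longrightarrow> dterms d = dterms e \<and> dcoef d = dcoef e"
  by (induction rule: deq.induct) (auto simp: algebra_simps)

subsection \<open>Completeness of the model\<close>

declare deq_trans[trans]

lemma deq_left_commute: "deq (DPlus a (DPlus b c)) (DPlus b (DPlus a c))"
proof -
  have "deq (DPlus a (DPlus b c)) (DPlus (DPlus a b) c)" by (rule deq_sym, rule deq_assoc)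
  also have "deq \<dots> (DPlus (DPlus b a) c)" by (rule deq_plus[OF deq_comm deq_refl])
  also have "deq \<dots> (DPlus b (DPlus a c))" by (rule deq_assoc)
  finally show ?thesis .
qed

lemma deq_plus_interchange: "deq (DPlus (DPlus a b) (DPlus c d)) (DPlus (DPlus a c) (DPlus b d))"
proof -
  have "deq (DPlus (DPlus a b) (DPlus c d)) (DPlus a (DPlus b (DPlus c d)))" by (rule deq_assoc)
  also have "deq \<dots> (DPlus a (DPlus c (DPlus b d)))" by (rule deq_plus[OF deq_refl deq_left_commute])
  also have "deq \<dots> (DPlus (DPlus a c) (DPlus b d))" by (rule deq_sym, rule deq_assoc)
  finally show ?thesis .
qed

lemma deq_zero_left: "deq (DPlus DZero d) d"
  by (rule deq_trans[OF deq_comm deq_zero])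

text \<open>With \<open>x = a \<cdot> 0\<close> and \<open>y = (1 - a) \<cdot> 0\<close> we have \<open>0 = x + y\<close> and \<open>x = x + x\<close>,
hence \<open>x = x + (x + y) = x + y = 0\<close>.\<close>
lemma deq_scal_DZero: "deq (DScal a DZero) DZero"
proof -
  let ?x = "DScal a DZero" and ?y = "DScal (1 - a) DZero"
  have "deq DZero (DScal 1 DZero)" by (rule deq_sym, rule deq_one)
  also have "DScal 1 DZero = DScal (a + (1 - a)) DZero" by simp
  also have "deq \<dots> (DPlus ?x ?y)" by (rule deq_distr1)
  finally have zero: "deq DZero (DPlus ?x ?y)" .
  have "deq ?x (DScal a (DPlus DZero DZero))" by (rule deq_scal, rule deq_sym, rule deq_zero)
  also have "deq \<dots> (DPlus ?x ?x)" by (rule deq_distr2)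
  finally have double: "deq ?x (DPlus ?x ?x)" .
  have "deq ?x (DPlus ?x DZero)" by (rule deq_sym, rule deq_zero)
  also have "deq \<dots> (DPlus ?x (DPlus ?x ?y))" by (rule deq_plus[OF deq_refl zero])
  also have "deq \<dots> (DPlus (DPlus ?x ?x) ?y)" by (rule deq_sym, rule deq_assoc)
  also have "deq \<dots> (DPlus ?x ?y)" by (rule deq_plus[OF deq_sym[OF double] deq_refl])
  also have "deq \<dots> DZero" by (rule deq_sym[OF zero])
  finally show ?thesis .
qed

lemma deq_absorb_zero_term: "u \<in> dterms d \<Longrightarrow> deq (DPlus d (DScal 0 (Pure u))) d"
proof (induction d rule: dterms.induct)
  case (2 t)
  then have "deq (DPlus (Pure t) (DScal 0 (Pure u))) (DPlus (DScal 1 (Pure t)) (DScal 0 (Pure t)))"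
    by (auto intro: deq_plus deq_sym deq_one deq_refl)
  also have "deq \<dots> (DScal (1 + 0) (Pure t))" by (rule deq_sym, rule deq_distr1)
  also have "deq \<dots> (Pure t)" by (simp add: deq_one)
  finally show ?case .
next
  case (3 d e)
  have "deq (DPlus (DPlus d e) (DScal 0 (Pure u))) (DPlus d (DPlus e (DScal 0 (Pure u))))"
    by (rule deq_assoc)
  moreover have "deq \<dots> (DPlus (DPlus d (DScal 0 (Pure u))) e)"
    by (rule deq_trans[OF deq_plus[OF deq_refl deq_comm] deq_sym[OF deq_assoc]])
  ultimately show ?case
    using 3 by (auto intro: deq_trans deq_plus deq_refl)
next
  case (4 a d)
  have "deq (DScal 0 (Pure u)) (DScal a (DScal 0 (Pure u)))"
    by (rule deq_sym, rule deq_trans[OF deq_mult], simp add: deq_refl)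
  then have "deq (DPlus (DScal a d) (DScal 0 (Pure u))) (DScal a (DPlus d (DScal 0 (Pure u))))"
    by (rule deq_trans[OF deq_plus[OF deq_refl] deq_sym[OF deq_distr2]])
  also have "deq \<dots> (DScal a d)" using 4 by (simp add: deq_scal)
  finally show ?case .
qed simp

definition lincomb :: "trm list \<Rightarrow> (trm \<Rightarrow> complex) \<Rightarrow> dist" where
  "lincomb xs c = foldr (\<lambda>u acc. DPlus (DScal (c u) (Pure u)) acc) xs DZero"

lemma lincomb_simps [simp]:
  "lincomb [] c = DZero"
  "lincomb (x # xs) c = DPlus (DScal (c x) (Pure x)) (lincomb xs c)"
  by (simp_all add: lincomb_def)

lemma lincomb_cong: "(\<And>u. u \<in> set xs \<Longrightarrow> c u = c' u) \<Longrightarrow> lincomb xs c = lincomb xs c'"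
  by (induction xs) auto

lemma dterms_lincomb: "dterms (lincomb xs c) = set xs"
  by (induction xs) auto

lemma dcoef_lincomb: "distinct xs \<Longrightarrow> dcoef (lincomb xs c) u = (if u \<in> set xs then c u else 0)"
  by (induction xs) auto

lemma lincomb_add: "deq (DPlus (lincomb xs c) (lincomb xs c')) (lincomb xs (\<lambda>u. c u + c' u))"
proof (induction xs)
  case (Cons x xs)
  have "deq (DPlus (lincomb (x # xs) c) (lincomb (x # xs) c'))
      (DPlus (DPlus (DScal (c x) (Pure x)) (DScal (c' x) (Pure x))) (DPlus (lincomb xs c) (lincomb xs c')))"
    by (simp add: deq_plus_interchange)
  also have "deq \<dots> (lincomb (x # xs) (\<lambda>u. c u + c' u))"
    using Cons by (simp add: deq_plus deq_sym[OF deq_distr1])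
  finally show ?case .
qed (simp add: deq_zero)

lemma lincomb_scal: "deq (DScal a (lincomb xs c)) (lincomb xs (\<lambda>u. a * c u))"
proof (induction xs)
  case (Cons x xs)
  have "deq (DScal a (lincomb (x # xs) c))
      (DPlus (DScal a (DScal (c x) (Pure x))) (DScal a (lincomb xs c)))"
    by (simp add: deq_distr2)
  also have "deq \<dots> (lincomb (x # xs) (\<lambda>u. a * c u))"
    by (simp add: deq_plus[OF deq_mult Cons.IH])
  finally show ?case .
qed (simp add: deq_scal_DZero)

lemma lincomb_add_term:
  assumes "distinct xs" and "t \<in> set xs"
  shows "deq (DPlus (DScal a (Pure t)) (lincomb xs c)) (lincomb xs (c(t := c t + a)))"
  using assms
proof (induction xs)
  case (Cons x xs)
  show ?case
  proof (cases "x = t")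
    case True
    with Cons.prems have rest: "lincomb xs (c(t := c t + a)) = lincomb xs c"
      by (auto intro: lincomb_cong)
    have "deq (DPlus (DScal a (Pure t)) (lincomb (x # xs) c))
        (DPlus (DPlus (DScal (c t) (Pure t)) (DScal a (Pure t))) (lincomb xs c))"
      using True by (simp add: deq_trans[OF deq_sym[OF deq_assoc] deq_plus[OF deq_comm deq_refl]])
    also have "deq \<dots> (lincomb (x # xs) (c(t := c t + a)))"
      using True rest by (simp add: deq_plus deq_refl deq_sym[OF deq_distr1])
    finally show ?thesis .
  next
    case False
    then have "deq (DPlus (DScal a (Pure t)) (lincomb (x # xs) c))
        (DPlus (DScal (c x) (Pure x)) (DPlus (DScal a (Pure t)) (lincomb xs c)))"
      by (simp add: deq_left_commute)
    also have "deq \<dots> (DPlus (DScal (c x) (Pure x)) (lincomb xs (c(t := c t + a))))"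
      by (rule deq_plus[OF deq_refl Cons.IH]) (use Cons.prems False in auto)
    finally show ?thesis using False by (simp only: lincomb_simps fun_upd_other[OF False])
  qed
qed simp

lemma deq_absorb_zero_lincomb: "set xs \<subseteq> dterms d \<Longrightarrow> deq (DPlus d (lincomb xs (\<lambda>_. 0))) d"
proof (induction xs)
  case (Cons x xs)
  have "deq (DPlus d (lincomb (x # xs) (\<lambda>_. 0))) (DPlus (DPlus d (DScal 0 (Pure x))) (lincomb xs (\<lambda>_. 0)))"
    by (simp add: deq_sym[OF deq_assoc])
  also have "deq \<dots> (DPlus d (lincomb xs (\<lambda>_. 0)))"
    using Cons.prems by (simp add: deq_plus deq_refl deq_absorb_zero_term)
  also have "deq \<dots> d" using Cons by simp
  finally show ?case .
qed (simp add: deq_zero)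

lemma deq_plus_lincomb:
  assumes "distinct xs" and "dterms d \<subseteq> set xs"
  shows "deq (DPlus d (lincomb xs c)) (lincomb xs (\<lambda>u. dcoef d u + c u))"
  using assms(2)
proof (induction d arbitrary: c rule: dterms.induct)
  case 1
  then show ?case by (simp add: deq_zero_left)
next
  case (2 t)
  have "deq (DPlus (Pure t) (lincomb xs c)) (DPlus (DScal 1 (Pure t)) (lincomb xs c))"
    by (simp add: deq_plus deq_refl deq_sym[OF deq_one])
  also have "deq \<dots> (lincomb xs (c(t := c t + 1)))"
    using 2 assms(1) by (simp add: lincomb_add_term)
  also have "lincomb xs (c(t := c t + 1)) = lincomb xs (\<lambda>u. dcoef (Pure t) u + c u)"
    by (intro lincomb_cong) auto
  finally show ?case .
next
  case (3 d e)
  have "deq (DPlus (DPlus d e) (lincomb xs c)) (DPlus d (DPlus e (lincomb xs c)))"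
    by (rule deq_assoc)
  also have "deq \<dots> (DPlus d (lincomb xs (\<lambda>u. dcoef e u + c u)))"
    using 3 by (simp add: deq_plus deq_refl)
  also have "deq \<dots> (lincomb xs (\<lambda>u. dcoef (DPlus d e) u + c u))"
    using 3 by (simp add: add.assoc)
  finally show ?case .
next
  case (4 a d)
  let ?z = "lincomb xs (\<lambda>_. 0)"
  have z_absorbs: "deq (lincomb xs c) (DPlus ?z (lincomb xs c))"
    by (rule deq_sym, rule deq_trans[OF lincomb_add], simp add: deq_refl)
  have z_scal: "deq ?z (DScal a ?z)"
    by (rule deq_sym, rule deq_trans[OF lincomb_scal], simp add: deq_refl)
  have IH_zero: "deq (DPlus d ?z) (lincomb xs (dcoef d))"
    using "4.IH"[of "\<lambda>_. 0"] "4.prems" by simp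
  have "deq (DPlus (DScal a d) (lincomb xs c)) (DPlus (DScal a d) (DPlus ?z (lincomb xs c)))"
    by (rule deq_plus[OF deq_refl z_absorbs])
  also have "deq \<dots> (DPlus (DPlus (DScal a d) (DScal a ?z)) (lincomb xs c))"
    by (rule deq_trans[OF deq_sym[OF deq_assoc] deq_plus[OF deq_plus[OF deq_refl z_scal] deq_refl]])
  also have "deq \<dots> (DPlus (DScal a (lincomb xs (dcoef d))) (lincomb xs c))"
    by (rule deq_plus[OF deq_trans[OF deq_sym[OF deq_distr2] deq_scal[OF IH_zero]] deq_refl])
  also have "deq \<dots> (DPlus (lincomb xs (\<lambda>u. a * dcoef d u)) (lincomb xs c))"
    by (simp add: deq_plus deq_refl lincomb_scal)
  also have "deq \<dots> (lincomb xs (\<lambda>u. dcoef (DScal a d) u + c u))"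
    by (simp add: lincomb_add)
  finally show ?case .
qed

lemma deq_lincomb_dcoef:
  assumes "distinct xs" and "set xs = dterms d"
  shows "deq d (lincomb xs (dcoef d))"
proof -
  have "deq d (DPlus d (lincomb xs (\<lambda>_. 0)))"
    using assms by (simp add: deq_sym deq_absorb_zero_lincomb)
  also have "deq \<dots> (lincomb xs (dcoef d))"
    using deq_plus_lincomb[OF assms(1), of d "\<lambda>_. 0"] assms(2) by simp
  finally show ?thesis .
qed

lemma deq_complete:
  assumes "dterms d = dterms e" and "dcoef d = dcoef e"
  shows "deq d e"
proof -
  obtain xs where xs: "distinct xs" "set xs = dterms d"
    using finite_distinct_list[OF finite_dterms] by blast
  have "deq d (lincomb xs (dcoef e))" using deq_lincomb_dcoef[OF xs] assms(2) by simp
  also have "deq \<dots> e" using deq_lincomb_dcoef[of xs e] xs assms(1) by (simp add: deq_sym)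
  finally show ?thesis .
qed

lemma deq_iff: "deq d e \<longleftrightarrow> dterms d = dterms e \<and> dcoef d = dcoef e"
  using deq_complete deq_sound by blast

lemma exists_dist_with_model:
  assumes "finite X" and "\<And>u. c u \<noteq> 0 \<Longrightarrow> u \<in> X"
  shows "\<exists>r. dterms r = X \<and> dcoef r = c"
proof -
  obtain xs where xs: "distinct xs" "set xs = X" using assms(1) finite_distinct_list by blast
  then have "dcoef (lincomb xs c) = c" using assms(2) by (intro ext) (auto simp: dcoef_lincomb)
  then show ?thesis using xs by (intro exI[of _ "lincomb xs c"]) (simp add: dterms_lincomb)
qed

subsection \<open>Steps in the model\<close>

inductive_cases atomic_V: "atomic (V v) d"

lemma atomic_deterministic: "atomic t d \<Longrightarrow> atomic t d' \<Longrightarrow> d = d'"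
proof (induction arbitrary: d' rule: atomic.induct)
qed (erule atomic.cases; auto elim: atomic_V)+

definition step_at :: "dist \<Rightarrow> dist \<Rightarrow> complex \<Rightarrow> trm \<Rightarrow> dist \<Rightarrow> bool" where
  "step_at d d' a s s' \<longleftrightarrow> atomic s s' \<and> s \<in> dterms d \<and>
     dcoef d' = (\<lambda>u. dcoef d u - a * (if u = s then 1 else 0) + a * dcoef s' u) \<and>
     (dterms d' = dterms s' \<union> dterms d \<or>
      (a = dcoef d s \<and> dterms d' = dterms s' \<union> (dterms d - {s})))"

lemma step_imp_step_at: "step d d' \<Longrightarrow> \<exists>a s s'. step_at d d' a s s'"
proof -
  assume "step d d'"
  then obtain a s s' r where "deq d (DPlus (DScal a (Pure s)) r)"
    and "deq d' (DPlus (DScal a s') r)" and at: "atomic s s'"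
    unfolding step_def by blast
  then have T: "dterms d = insert s (dterms r)" "dterms d' = dterms s' \<union> dterms r"
    and C: "dcoef d = (\<lambda>u. a * (if u = s then 1 else 0) + dcoef r u)"
      "dcoef d' = (\<lambda>u. a * dcoef s' u + dcoef r u)"
    by (auto simp: deq_iff)
  have "s \<notin> dterms r \<Longrightarrow> a = dcoef d s"
    using C(1) dcoef_nonzero_imp_dterms[of r s] by auto
  then show ?thesis
    unfolding step_at_def using at T C
    by (intro exI[of _ a] exI[of _ s] exI[of _ s']) (auto simp: insert_absorb)
qed

lemma step_at_imp_step:
  assumes "step_at d d' a s s'"
  shows "step d d'"
proof -
  from assms have at: "atomic s s'" and s_in: "s \<in> dterms d"
    and C: "dcoef d' = (\<lambda>u. dcoef d u - a * (if u = s then 1 else 0) + a * dcoef s' u)"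
    and T: "dterms d' = dterms s' \<union> dterms d \<or>
      (a = dcoef d s \<and> dterms d' = dterms s' \<union> (dterms d - {s}))"
    unfolding step_at_def by auto
  define R where "R = (if dterms d' = dterms s' \<union> dterms d then dterms d else dterms d - {s})"
  define cr where "cr = (\<lambda>u. dcoef d u - a * (if u = s then 1 else 0))"
  have "finite R" unfolding R_def using finite_dterms by simp
  moreover have "\<And>u. cr u \<noteq> 0 \<Longrightarrow> u \<in> R"
    using T s_in dcoef_nonzero_imp_dterms[of d] unfolding R_def cr_def by (auto split: if_splits)
  ultimately obtain r where r: "dterms r = R" "dcoef r = cr"
    using exists_dist_with_model by blast
  have "deq d (DPlus (DScal a (Pure s)) r)" and "deq d' (DPlus (DScal a s') r)"
    unfolding deq_iff using r s_in T C unfolding R_def cr_def by (auto simp: algebra_simps)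
  then show ?thesis unfolding step_def using at by blast
qed

subsection \<open>Confluence\<close>

text \<open>Of two steps on the same redex, the one that keeps the redex can be continued by
consuming the remaining difference \<open>b - a\<close> of its coefficient.\<close>
lemma step_at_catch_up:
  assumes 1: "step_at t t1 a s s'" and 2: "step_at t t2 b s s'"
    and keeps: "dterms t1 = dterms s' \<union> dterms t"
  shows "step_at t1 t2 (b - a) s s'"
proof -
  from 1 have at: "atomic s s'" and s_in: "s \<in> dterms t"
    and C1: "dcoef t1 = (\<lambda>u. dcoef t u - a * (if u = s then 1 else 0) + a * dcoef s' u)"
    unfolding step_at_def by auto
  from 2 have C2: "dcoef t2 = (\<lambda>u. dcoef t u - b * (if u = s then 1 else 0) + b * dcoef s' u)"
    and T2: "dterms t2 = dterms s' \<union> dterms t \<or>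
      (b = dcoef t s \<and> dterms t2 = dterms s' \<union> (dterms t - {s}))"
    unfolding step_at_def by auto
  have "s \<notin> dterms s' \<Longrightarrow> dcoef s' s = 0"
    using dcoef_nonzero_imp_dterms by blast
  then have "dterms t2 = dterms s' \<union> dterms t1 \<or>
      (b - a = dcoef t1 s \<and> dterms t2 = dterms s' \<union> (dterms t1 - {s}))"
    using T2 keeps C1 by (cases "s \<in> dterms s'") auto
  then show ?thesis
    unfolding step_at_def using at s_in keeps C1 C2 by (auto simp: algebra_simps)
qed

lemma step_at_same_redex:
  assumes 1: "step_at t t1 a s s'" and 2: "step_at t t2 b s s'"
  shows "deq t1 t2 \<or> step t1 t2 \<or> step t2 t1"
proof (cases "dterms t1 = dterms s' \<union> dterms t \<or> dterms t2 = dterms s' \<union> dterms t")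
  case True
  then show ?thesis
    using step_at_catch_up[OF 1 2] step_at_catch_up[OF 2 1] step_at_imp_step by blast
next
  case False
  with 1 2 have "deq t1 t2" unfolding step_at_def deq_iff by auto
  then show ?thesis ..
qed

text \<open>The common reduct \<open>t''\<close> contains the redex \<open>s\<^sub>i\<close> exactly when \<open>t\<^sub>i\<close> still contains it.\<close>
lemma step_at_commute:
  assumes 1: "step_at t t1 a s1 s1'" and 2: "step_at t t2 b s2 s2'" and ne: "s1 \<noteq> s2"
    and T: "dterms t'' = dterms s1' \<union> dterms s2' \<union> (dterms t - {s1, s2}) \<union>
      (dterms t1 \<inter> {s1}) \<union> (dterms t2 \<inter> {s2})"
    and C: "dcoef t'' = (\<lambda>u. dcoef t u - a * (if u = s1 then 1 else 0) - b * (if u = s2 then 1 else 0)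
      + a * dcoef s1' u + b * dcoef s2' u)"
  shows "step_at t1 t'' b s2 s2'"
proof -
  from 1 have s1_in: "s1 \<in> dterms t"
    and C1: "dcoef t1 = (\<lambda>u. dcoef t u - a * (if u = s1 then 1 else 0) + a * dcoef s1' u)"
    and T1: "dterms t1 = dterms s1' \<union> dterms t \<or>
      (a = dcoef t s1 \<and> dterms t1 = dterms s1' \<union> (dterms t - {s1}))"
    unfolding step_at_def by auto
  from 2 have at2: "atomic s2 s2'" and s2_in: "s2 \<in> dterms t"
    and T2: "dterms t2 = dterms s2' \<union> dterms t \<or>
      (b = dcoef t s2 \<and> dterms t2 = dterms s2' \<union> (dterms t - {s2}))"
    unfolding step_at_def by auto
  have s2_in1: "s2 \<in> dterms t1" using T1 s2_in ne by auto
  have "dterms t'' = dterms s2' \<union> dterms t1 \<or>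
      (b = dcoef t1 s2 \<and> dterms t'' = dterms s2' \<union> (dterms t1 - {s2}))"
  proof (cases "s2 \<in> dterms t2 \<or> s2 \<in> dterms s1'")
    case True
    then show ?thesis using T T1 s1_in s2_in1 ne by auto
  next
    case False
    then have "s2 \<notin> dterms s2'" and b: "b = dcoef t s2" using T2 s2_in by auto
    moreover have "dcoef s1' s2 = 0" using False dcoef_nonzero_imp_dterms by blast
    ultimately show ?thesis using False T T1 C1 s1_in s2_in1 ne by auto
  qed
  then show ?thesis
    unfolding step_at_def using at2 s2_in1 C C1 by (auto simp: algebra_simps)
qed

lemma step_at_diamond:
  assumes 1: "step_at t t1 a s1 s1'" and 2: "step_at t t2 b s2 s2'" and ne: "s1 \<noteq> s2"
  shows "\<exists>t''. step t1 t'' \<and> step t2 t''"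
proof -
  define X where "X = dterms s1' \<union> dterms s2' \<union> (dterms t - {s1, s2}) \<union>
    (dterms t1 \<inter> {s1}) \<union> (dterms t2 \<inter> {s2})"
  define c where "c = (\<lambda>u. dcoef t u - a * (if u = s1 then 1 else 0) - b * (if u = s2 then 1 else 0)
    + a * dcoef s1' u + b * dcoef s2' u)"
  from 1 2 have C1: "dcoef t1 = (\<lambda>u. dcoef t u - a * (if u = s1 then 1 else 0) + a * dcoef s1' u)"
    and C2: "dcoef t2 = (\<lambda>u. dcoef t u - b * (if u = s2 then 1 else 0) + b * dcoef s2' u)"
    unfolding step_at_def by auto
  have "finite X" unfolding X_def using finite_dterms by auto
  moreover have "u \<in> X" if "c u \<noteq> 0" for u
  proof (cases "u \<in> dterms s1' \<union> dterms s2'")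
    case False
    then have "dcoef s1' u = 0" "dcoef s2' u = 0" using dcoef_nonzero_imp_dterms by blast+
    then show ?thesis
      using that C1 C2 ne dcoef_nonzero_imp_dterms[of t u] dcoef_nonzero_imp_dterms[of t1 u]
        dcoef_nonzero_imp_dterms[of t2 u]
      unfolding X_def c_def by (auto split: if_splits)
  qed (auto simp: X_def)
  ultimately obtain t'' where T: "dterms t'' = X" "dcoef t'' = c"
    using exists_dist_with_model by blast
  have "step_at t1 t'' b s2 s2'"
    by (rule step_at_commute[OF 1 2 ne]) (use T in \<open>simp_all add: X_def c_def\<close>)
  moreover have "step_at t2 t'' a s1 s1'"
    by (rule step_at_commute[OF 2 1 ne[symmetric]]) (use T in \<open>auto simp: X_def c_def algebra_simps\<close>)
  ultimately show ?thesis using step_at_imp_step by blast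
qed

theorem mainTheorem8:
  assumes "step t t1" and "step t t2"
  shows "deq t1 t2 \<or> step t1 t2 \<or> step t2 t1 \<or> (\<exists>t''. step t1 t'' \<and> step t2 t'')"
proof -
  obtain a s1 s1' where 1: "step_at t t1 a s1 s1'" using assms(1) step_imp_step_at by blast
  obtain b s2 s2' where 2: "step_at t t2 b s2 s2'" using assms(2) step_imp_step_at by blast
  show ?thesis
  proof (cases "s1 = s2")
    case True
    with 1 2 have "s1' = s2'" unfolding step_at_def using atomic_deterministic by blast
    with 1 2 True show ?thesis using step_at_same_redex by blast
  next
    case False
    with 1 2 show ?thesis using step_at_diamond by blast
  qed
qed

end
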